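(* Consider a $2\times N$ switch with traffic pattern consisting of one broadcast flow from input 1 to all $N$ outputs with rate $r_0$ and, for each $i\in[N]$, a unicast flow from input 2 to output $i$ with rate $r_i$. With fanout splitting but no coding, the achievable rate region is exactly the set of (rational) vectors $(r_0,r_1,\dots,r_N)$ satisfying $r_i\ge0$ for $i=0,\dots,N$; $\sum_{i=1}^N r_i\le1$; $r_0+r_i\le1$ for $i=1,\dots,N$; and $2r_0+\sum_{i=1}^N r_i\le 2$.
   Context: Slotted time. A configuration: each input idles or picks one of its flows and connects to a subset of that flow's fanout outputs, sending one packet to all connected outputs; each output connects to at most one input. Without coding, every transmitted packet is one original packet of the flow (fanout splitting means a broadcast packet may be delivered to different outputs in different slots); a packet is served once it has been delivered to all outputs in its fanout and is then removed from its queue. A frame is $F$ consecutive slots; a frame-based schedule is a fixed sequence of $F$ configurations repeated each frame. Here the achievable rate region is the set of rational rate vectors for which there is a frame-based schedule (without coding) with frame size $F$ such that each $r_iF$ is an integer and, for every flow and every frame $n\ge1$, the oldest $r F$ packets (with $r$ the flow's rate) in the flow's queue at the end of frame $n-1$ are served by the end of frame $n$ (all of them if there are fewer). *)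

theory Defs
  imports Complex_Main
begin

text \<open>Flows are natural numbers drawn from a finite set Fl; flow f enters at input
  inp f and has fanout set fan f (a set of outputs).  A configuration maps each
  input either to None (idle) or to Some (f, S): the input picks its flow f and
  connects to the subset S of the fanout of f.\<close>

type_synonym config = "nat \<Rightarrow> (nat \<times> nat set) option"

definition valid_config ::
  "nat set \<Rightarrow> (nat \<Rightarrow> nat) \<Rightarrow> (nat \<Rightarrow> nat set) \<Rightarrow> config \<Rightarrow> bool" where
  "valid_config Fl inp fan c \<longleftrightarrow>
     (\<forall>i f S. c i = Some (f, S) \<longrightarrow> f \<in> Fl \<and> inp f = i \<and> S \<subseteq> fan f) \<and>
     (\<forall>i1 i2 f1 f2 S1 S2. c i1 = Some (f1, S1) \<and> c i2 = Some (f2, S2) \<and> i1 \<noteq> i2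
        \<longrightarrow> S1 \<inter> S2 = {})"

text \<open>Arrivals: A f t is the number of packets of flow f that have arrived before
  slot t (i.e. are available for transmission in slot t); packets of a flow are
  numbered 0,1,2,... in arrival order.  Packet selection (no coding):
  P A t i is the packet (index of the flow chosen by input i in slot t) that
  input i transmits in slot t under arrival process A (None = nothing sent).\<close>

definition delivered ::
  "(nat \<Rightarrow> config) \<Rightarrow> nat \<Rightarrow> (nat \<Rightarrow> nat \<Rightarrow> nat option) \<Rightarrow> nat \<Rightarrow> nat \<Rightarrow> nat \<Rightarrow> nat \<Rightarrow> bool" where
  "delivered sched F P f k j T \<longleftrightarrow>
     (\<exists>t<T. \<exists>i S. sched (t mod F) i = Some (f, S) \<and> j \<in> S \<and> P t i = Some k)"

definition served ::
  "(nat \<Rightarrow> nat set) \<Rightarrow> (nat \<Rightarrow> config) \<Rightarrow> nat \<Rightarrow> (nat \<Rightarrow> nat \<Rightarrow> nat option) \<Rightarrow> nat \<Rightarrow> nat \<Rightarrow> nat \<Rightarrow> bool" where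
  "served fan sched F P f k T \<longleftrightarrow> (\<forall>j\<in>fan f. delivered sched F P f k j T)"

definition in_queue ::
  "(nat \<Rightarrow> nat \<Rightarrow> nat) \<Rightarrow> (nat \<Rightarrow> nat set) \<Rightarrow> (nat \<Rightarrow> config) \<Rightarrow> nat \<Rightarrow> (nat \<Rightarrow> nat \<Rightarrow> nat option)
     \<Rightarrow> nat \<Rightarrow> nat \<Rightarrow> nat \<Rightarrow> bool" where
  "in_queue A fan sched F P f k T \<longleftrightarrow> k < A f T \<and> \<not> served fan sched F P f k T"

definition causal :: "((nat \<Rightarrow> nat \<Rightarrow> nat) \<Rightarrow> nat \<Rightarrow> nat \<Rightarrow> nat option) \<Rightarrow> bool" where
  "causal P \<longleftrightarrow> (\<forall>A A' t i. (\<forall>f s. s \<le> t \<longrightarrow> A f s = A' f s) \<longrightarrow> P A t i = P A' t i)"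

definition achievable ::
  "nat set \<Rightarrow> (nat \<Rightarrow> nat) \<Rightarrow> (nat \<Rightarrow> nat set) \<Rightarrow> (nat \<Rightarrow> rat) \<Rightarrow> bool" where
  "achievable Fl inp fan r \<longleftrightarrow>
     (\<exists>F::nat. F > 0 \<and> (\<exists>q::nat \<Rightarrow> nat. (\<forall>f\<in>Fl. r f * of_nat F = of_nat (q f)) \<and>
       (\<exists>sched P. (\<forall>t<F. valid_config Fl inp fan (sched t)) \<and> causal P \<and>
         (\<forall>A. (\<forall>f. mono (A f)) \<longrightarrow>
            (\<forall>t i f S k. sched (t mod F) i = Some (f, S) \<and> P A t i = Some k
                 \<longrightarrow> in_queue A fan sched F (P A) f k t) \<and>
            (\<forall>f\<in>Fl. \<forall>n\<ge>1. \<forall>k. in_queue A fan sched F (P A) f k ((n - 1) * F) \<and>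
                 card {k'. k' < k \<and> in_queue A fan sched F (P A) f k' ((n - 1) * F)} < q f
                 \<longrightarrow> served fan sched F (P A) f k (n * F))))))"

definition flows2N :: "nat \<Rightarrow> nat set" where "flows2N N = {0..N}"
definition inp2N :: "nat \<Rightarrow> nat" where "inp2N f = (if f = 0 then 1 else 2)"
definition fan2N :: "nat \<Rightarrow> nat \<Rightarrow> nat set" where
  "fan2N N f = (if f = 0 then {1..N} else {f})"

end

theory Submission
  imports Defs
begin

text \<open>
  Necessity: if q f packets of every flow f are waiting at time 0, a schedule with quotas
  q f = r f F must deliver all of them within the first frame. Each unicast packet occupies a
  slot of input 2; the broadcast packets and the unicast packets for output i use output i in
  distinct slots; and a broadcast packet sent only in slots where input 2 is busy needs two.
  Counting slots gives the three inequalities multiplied by F.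

  Sufficiency: conversely, the inequalities allow a frame of F slots in which input 2 sends its
  unicast packets back to back and input 1 sends each broadcast packet either whole, while
  input 2 is idle, or split into two complementary transmissions while input 2 serves other
  outputs. Repeating this frame and serving in each frame the oldest q f waiting packets of
  every flow achieves the rates.
\<close>

lemma served_mono:
  "served fan sched F P f k T \<Longrightarrow> T \<le> T' \<Longrightarrow> served fan sched F P f k T'"
  unfolding served_def delivered_def by (meson less_le_trans)

text \<open>A frame design: in slot u of every frame, input i transmits the packet at position
  offset u i among the (at most q f) packets of its flow f assigned to the current frame, if
  there is one.\<close>

locale frame_design =
  fixes Fl :: "nat set" and inp :: "nat \<Rightarrow> nat" and fan :: "nat \<Rightarrow> nat set"
    and F :: nat and q :: "nat \<Rightarrow> nat" and cfg :: "nat \<Rightarrow> config"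
    and offset :: "nat \<Rightarrow> nat \<Rightarrow> nat"
  assumes frame_pos: "F > 0"
    and cfg_valid: "\<And>u. u < F \<Longrightarrow> valid_config Fl inp fan (cfg u)"
    and cfg_outputs_nonempty: "\<And>u i f S. u < F \<Longrightarrow> cfg u i = Some (f, S) \<Longrightarrow> S \<noteq> {}"
    and same_offset_disjoint: "\<And>u u' i f S S'. u < F \<Longrightarrow> u' < F \<Longrightarrow> u \<noteq> u' \<Longrightarrow>
       cfg u i = Some (f, S) \<Longrightarrow> cfg u' i = Some (f, S') \<Longrightarrow> offset u i = offset u' i \<Longrightarrow>
       S \<inter> S' = {}"
    and offsets_covered: "\<And>f g j. f \<in> Fl \<Longrightarrow> g < q f \<Longrightarrow> j \<in> fan f \<Longrightarrow>
       \<exists>u<F. \<exists>S. cfg u (inp f) = Some (f, S) \<and> offset u (inp f) = g \<and> j \<in> S"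
    and fan_nonempty: "\<And>f. f \<in> Fl \<Longrightarrow> fan f \<noteq> {}"
begin

text \<open>Frame m (slots m F ..< (m + 1) F) serves the packets cleared A f m ..< cleared A f (m + 1)
  of flow f: the next q f of those that have arrived by the start of the frame.\<close>

fun cleared :: "(nat \<Rightarrow> nat \<Rightarrow> nat) \<Rightarrow> nat \<Rightarrow> nat \<Rightarrow> nat" where
  "cleared A f 0 = 0"
| "cleared A f (Suc m) = min (cleared A f m + q f) (A f (m * F))"

definition select :: "(nat \<Rightarrow> nat \<Rightarrow> nat) \<Rightarrow> nat \<Rightarrow> nat \<Rightarrow> nat option" where
  "select A t i = (case cfg (t mod F) i of
       None \<Rightarrow> None
     | Some (f, S) \<Rightarrow>
         (let k = cleared A f (t div F) + offset (t mod F) i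
          in if k < cleared A f (Suc (t div F)) then Some k else None))"

lemma cleared_le_arrivals: "mono (A f) \<Longrightarrow> cleared A f m \<le> A f (m * F)"
proof (induction m)
  case (Suc m)
  have "A f (m * F) \<le> A f (Suc m * F)"
    using Suc.prems by (simp add: monoD)
  then show ?case by simp
qed simp

lemma cleared_mono: "mono (A f) \<Longrightarrow> m \<le> m' \<Longrightarrow> cleared A f m \<le> cleared A f m'"
  by (rule lift_Suc_mono_le[of "cleared A f"]) (use cleared_le_arrivals in simp_all)

lemma cleared_causal:
  assumes "\<forall>f s. s \<le> t \<longrightarrow> A f s = A' f s" and "m \<le> Suc (t div F)"
  shows "cleared A f m = cleared A' f m"
  using assms(2)
proof (induction m)
  case (Suc m)
  have "m * F \<le> t div F * F" using Suc.prems by simp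
  also have "\<dots> \<le> t" by simp
  finally show ?case using Suc assms(1) by simp
qed simp

lemma causal_select: "causal select"
  unfolding causal_def
proof (intro allI impI)
  fix A A' :: "nat \<Rightarrow> nat \<Rightarrow> nat" and t i
  assume "\<forall>f s. s \<le> t \<longrightarrow> A f s = A' f s"
  then have this_frame: "cleared A f (t div F) = cleared A' f (t div F)"
    and next_frame: "cleared A f (Suc (t div F)) = cleared A' f (Suc (t div F))" for f
    using cleared_causal by (blast intro: le_SucI)+
  show "select A t i = select A' t i"
    unfolding select_def this_frame next_frame ..
qed

lemma select_SomeD:
  "select A t i = Some k \<Longrightarrow> cfg (t mod F) i = Some (f, S) \<Longrightarrow>
   k = cleared A f (t div F) + offset (t mod F) i \<and> k < cleared A f (Suc (t div F))"
  unfolding select_def by (auto simp: Let_def split: if_splits)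

lemma cleared_frame:
  "k < cleared A f m \<Longrightarrow> \<exists>n<m. cleared A f n \<le> k \<and> k < cleared A f (Suc n)"
proof (induction m)
  case (Suc m)
  show ?case
  proof (cases "k < cleared A f m")
    case True
    then show ?thesis using Suc.IH less_SucI by blast
  next
    case False
    then show ?thesis using Suc.prems by auto
  qed
qed simp

lemma cfg_SomeD: "u < F \<Longrightarrow> cfg u i = Some (f, S) \<Longrightarrow> f \<in> Fl \<and> inp f = i \<and> S \<subseteq> fan f"
  using cfg_valid unfolding valid_config_def by blast

lemma served_in_frame:
  assumes "f \<in> Fl" "cleared A f n \<le> k" "k < cleared A f (Suc n)"
  shows "served fan cfg F (select A) f k (Suc n * F)"
  unfolding served_def delivered_def
proof
  fix j assume j: "j \<in> fan f"
  define g where "g = k - cleared A f n"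
  have g: "g < q f"
    using assms(2,3) unfolding g_def by (simp add: less_diff_conv2)
  obtain u S where u: "u < F" "cfg u (inp f) = Some (f, S)" "offset u (inp f) = g" "j \<in> S"
    using offsets_covered[OF assms(1) g j] by blast
  define t where "t = n * F + u"
  have t: "t mod F = u" "t div F = n" "t < Suc n * F"
    unfolding t_def using u(1) by simp_all
  have "select A t (inp f) = Some k"
    unfolding select_def t using u assms(2,3) g_def by (simp add: Let_def)
  then show "\<exists>t<Suc n * F. \<exists>i S. cfg (t mod F) i = Some (f, S) \<and> j \<in> S \<and> select A t i = Some k"
    using u t by blast
qed

lemma in_queue_frame_start_iff:
  assumes mono: "mono (A f)" and f: "f \<in> Fl"
  shows "in_queue A fan cfg F (select A) f k (m * F) \<longleftrightarrow> cleared A f m \<le> k \<and> k < A f (m * F)"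
proof
  assume queued: "in_queue A fan cfg F (select A) f k (m * F)"
  have "\<not> k < cleared A f m"
  proof
    assume "k < cleared A f m"
    then obtain n where "n < m" "cleared A f n \<le> k" "k < cleared A f (Suc n)"
      using cleared_frame by blast
    then have "served fan cfg F (select A) f k (m * F)"
      using served_in_frame[OF f] served_mono by (meson Suc_leI mult_le_mono1)
    then show False
      using queued unfolding in_queue_def by blast
  qed
  then show "cleared A f m \<le> k \<and> k < A f (m * F)"
    using queued unfolding in_queue_def by simp
next
  assume k: "cleared A f m \<le> k \<and> k < A f (m * F)"
  have "\<not> served fan cfg F (select A) f k (m * F)"
  proof
    assume "served fan cfg F (select A) f k (m * F)"
    moreover obtain j where "j \<in> fan f"
      using fan_nonempty[OF f] by blast
    ultimately obtain t i S where t: "t < m * F" "cfg (t mod F) i = Some (f, S)" "select A t i = Some k"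
      unfolding served_def delivered_def by blast
    then have "k < cleared A f (Suc (t div F))"
      using select_SomeD by blast
    also have "\<dots> \<le> cleared A f m"
      using t(1) by (intro cleared_mono[of A f, OF mono]) (simp add: less_mult_imp_div_less Suc_leI)
    finally show False
      using k by simp
  qed
  then show "in_queue A fan cfg F (select A) f k (m * F)"
    using k unfolding in_queue_def by simp
qed

text \<open>Two transmissions of the same packet fall into the same frame and, having the same
  offset, reach disjoint sets of outputs.\<close>

lemma retransmission_disjoint:
  assumes mono: "mono (A f)" and "t' < t"
    and sent: "cfg (t mod F) i = Some (f, S)" "select A t i = Some k"
    and sent': "cfg (t' mod F) i' = Some (f, S')" "select A t' i' = Some k"
  shows "S \<inter> S' = {}"
proof -
  have slots: "t mod F < F" "t' mod F < F"
    using frame_pos by simp_all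
  have same_input: "i' = i"
    using cfg_SomeD[OF slots(1) sent(1)] cfg_SomeD[OF slots(2) sent'(1)] by simp
  note k = select_SomeD[OF sent(2,1)] and k' = select_SomeD[OF sent'(2,1)]
  have "t' div F \<le> t div F"
    using \<open>t' < t\<close> by (simp add: div_le_mono)
  moreover have "\<not> t' div F < t div F"
  proof
    assume "t' div F < t div F"
    then have "cleared A f (Suc (t' div F)) \<le> cleared A f (t div F)"
      using cleared_mono[of A f, OF mono] by (simp del: cleared.simps)
    then show False
      using k k' by linarith
  qed
  ultimately have same_frame: "t' div F = t div F"
    by simp
  then have "t mod F \<noteq> t' mod F"
    using \<open>t' < t\<close> by (metis div_mult_mod_eq less_irrefl)
  moreover have "offset (t mod F) i = offset (t' mod F) i"
    using k k' same_frame same_input by simp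
  ultimately show ?thesis
    by (rule same_offset_disjoint[OF slots _ sent(1) sent'(1)[unfolded same_input]])
qed

lemma select_in_queue:
  assumes mono: "\<And>f. mono (A f)"
    and sent: "cfg (t mod F) i = Some (f, S)" "select A t i = Some k"
  shows "in_queue A fan cfg F (select A) f k t"
proof -
  have slot: "t mod F < F"
    using frame_pos by simp
  have "S \<subseteq> fan f"
    using cfg_SomeD[OF slot sent(1)] by blast
  moreover obtain j where j: "j \<in> S"
    using cfg_outputs_nonempty[OF slot sent(1)] by blast
  moreover have "\<not> delivered cfg F (select A) f k j t"
    using retransmission_disjoint[of A f, OF mono _ sent] j unfolding delivered_def by blast
  moreover have "k < A f t"
  proof -
    have "k < cleared A f (Suc (t div F))"
      using select_SomeD[OF sent(2,1)] by blast
    also have "\<dots> \<le> A f (t div F * F)"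
      by simp
    also have "\<dots> \<le> A f t"
      using mono by (simp add: monoD)
    finally show ?thesis .
  qed
  ultimately show ?thesis
    unfolding in_queue_def served_def by blast
qed

lemma oldest_served:
  assumes mono: "\<And>f. mono (A f)" and f: "f \<in> Fl" and "n \<ge> 1"
    and queued: "in_queue A fan cfg F (select A) f k ((n - 1) * F)"
    and older: "card {k'. k' < k \<and> in_queue A fan cfg F (select A) f k' ((n - 1) * F)} < q f"
  shows "served fan cfg F (select A) f k (n * F)"
proof -
  obtain m where n: "n = Suc m"
    using \<open>n \<ge> 1\<close> by (cases n) auto
  note queue = in_queue_frame_start_iff[of A f, OF mono f, of _ m]
  have k: "cleared A f m \<le> k" "k < A f (m * F)"
    using queued by (simp_all add: n queue)
  have "{k'. k' < k \<and> in_queue A fan cfg F (select A) f k' ((n - 1) * F)} = {cleared A f m..<k}"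
    using k by (auto simp: n queue)
  then have "k < cleared A f (Suc m)"
    using older k by simp
  then show ?thesis
    unfolding n by (rule served_in_frame[OF f k(1)])
qed

lemma design_achievable:
  assumes "\<forall>f\<in>Fl. r f * of_nat F = of_nat (q f)"
  shows "achievable Fl inp fan r"
  unfolding achievable_def
proof (intro exI conjI)
  show "F > 0" by (rule frame_pos)
  show "\<forall>f\<in>Fl. r f * of_nat F = of_nat (q f)" by (rule assms)
  show "\<forall>t<F. valid_config Fl inp fan (cfg t)" using cfg_valid by blast
  show "causal select" by (rule causal_select)
  show "\<forall>A. (\<forall>f. mono (A f)) \<longrightarrow>
    (\<forall>t i f S k. cfg (t mod F) i = Some (f, S) \<and> select A t i = Some k \<longrightarrow>
      in_queue A fan cfg F (select A) f k t) \<and>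
    (\<forall>f\<in>Fl. \<forall>n\<ge>1. \<forall>k. in_queue A fan cfg F (select A) f k ((n - 1) * F) \<and>
      card {k'. k' < k \<and> in_queue A fan cfg F (select A) f k' ((n - 1) * F)} < q f \<longrightarrow>
      served fan cfg F (select A) f k (n * F))"
    using select_in_queue oldest_served by blast
qed

end

lemma achievable_first_frame_delivery:
  assumes "achievable Fl inp fan r"
  obtains F q sched sel where "F > 0" "\<forall>f\<in>Fl. r f * of_nat F = of_nat (q f)"
    "\<forall>t<F. valid_config Fl inp fan (sched t)"
    "\<And>f k j. f \<in> Fl \<Longrightarrow> k < q f \<Longrightarrow> j \<in> fan f \<Longrightarrow>
       \<exists>t<F. \<exists>i S. sched t i = Some (f, S) \<and> j \<in> S \<and> sel t i = Some k"
proof -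
  from assms obtain F q sched P where F: "F > 0" and rates: "\<forall>f\<in>Fl. r f * of_nat F = of_nat (q f)"
    and valid: "\<forall>t<F. valid_config Fl inp fan (sched t)"
    and guarantee: "\<forall>A. (\<forall>f. mono (A f)) \<longrightarrow>
      (\<forall>t i f S k. sched (t mod F) i = Some (f, S) \<and> P A t i = Some k
         \<longrightarrow> in_queue A fan sched F (P A) f k t) \<and>
      (\<forall>f\<in>Fl. \<forall>n\<ge>1. \<forall>k. in_queue A fan sched F (P A) f k ((n - 1) * F) \<and>
         card {k'. k' < k \<and> in_queue A fan sched F (P A) f k' ((n - 1) * F)} < q f
         \<longrightarrow> served fan sched F (P A) f k (n * F))"
    unfolding achievable_def by (elim exE conjE) blast
  \<comment> \<open>The guarantee for the arrival process with q f packets of every flow f present at time 0.\<close>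
  define A :: "nat \<Rightarrow> nat \<Rightarrow> nat" where "A f t = q f" for f t
  have "mono (A f)" for f
    by (simp add: A_def mono_def)
  then have frames: "\<forall>f\<in>Fl. \<forall>n\<ge>1. \<forall>k. in_queue A fan sched F (P A) f k ((n - 1) * F) \<and>
      card {k'. k' < k \<and> in_queue A fan sched F (P A) f k' ((n - 1) * F)} < q f
      \<longrightarrow> served fan sched F (P A) f k (n * F)"
    using guarantee[THEN spec[of _ A]] by blast
  have first_frame: "served fan sched F (P A) f k F"
    if "f \<in> Fl" "in_queue A fan sched F (P A) f k 0"
      "card {k'. k' < k \<and> in_queue A fan sched F (P A) f k' 0} < q f" for f k
    using frames[rule_format, of f 1 k] that by simp
  have delivery: "\<exists>t<F. \<exists>i S. sched t i = Some (f, S) \<and> j \<in> S \<and> P A t i = Some k"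
    if f: "f \<in> Fl" and k: "k < q f" and j: "j \<in> fan f" for f k j
  proof -
    have queued: "in_queue A fan sched F (P A) f k' 0 \<longleftrightarrow> k' < q f" for k'
      using j unfolding in_queue_def served_def delivered_def A_def by auto
    have "{k'. k' < k \<and> in_queue A fan sched F (P A) f k' 0} = {..<k}"
      using k by (auto simp: queued)
    then have "served fan sched F (P A) f k F"
      using first_frame f k queued by simp
    then show ?thesis
      using j unfolding served_def delivered_def by (metis mod_less)
  qed
  show thesis
    by (rule that[OF F rates valid delivery])
qed

definition slot_constraints :: "nat \<Rightarrow> nat \<Rightarrow> (nat \<Rightarrow> nat) \<Rightarrow> bool" where
  "slot_constraints N F q \<longleftrightarrow>
     (\<Sum>i=1..N. q i) \<le> F \<and> (\<forall>i\<in>{1..N}. q 0 + q i \<le> F) \<and> 2 * q 0 + (\<Sum>i=1..N. q i) \<le> 2 * F"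

lemma rate_region_iff_slot_constraints:
  fixes r :: "nat \<Rightarrow> rat" and q :: "nat \<Rightarrow> nat"
  assumes F: "F > 0" and rates: "\<forall>f\<in>{0..N}. r f * of_nat F = of_nat (q f)"
  shows "(\<forall>i\<in>{0..N}. r i \<ge> 0) \<and> (\<Sum>i=1..N. r i) \<le> 1 \<and> (\<forall>i\<in>{1..N}. r 0 + r i \<le> 1) \<and>
      2 * r 0 + (\<Sum>i=1..N. r i) \<le> 2 \<longleftrightarrow> slot_constraints N F q"
proof -
  have F_pos: "(0::rat) < of_nat F"
    using F by simp
  have r: "r i = of_nat (q i) / of_nat F" if "i \<in> {0..N}" for i
    using rates that F_pos by (simp add: eq_divide_eq)
  have sum: "(\<Sum>i=1..N. r i) = of_nat (\<Sum>i=1..N. q i) / of_nat F"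
    by (simp add: r sum_divide_distrib)
  have "(\<Sum>i=1..N. r i) \<le> 1 \<longleftrightarrow> (\<Sum>i=1..N. q i) \<le> F"
    unfolding sum using F_pos by (simp add: divide_le_eq del: of_nat_sum)
  moreover have "r 0 + r i \<le> 1 \<longleftrightarrow> q 0 + q i \<le> F" if "i \<in> {1..N}" for i
  proof -
    have "r 0 + r i = of_nat (q 0 + q i) / of_nat F"
      using r[of 0] r[of i] that by (simp add: add_divide_distrib)
    then show ?thesis
      using F_pos by (simp add: divide_le_eq del: of_nat_add)
  qed
  moreover have "2 * r 0 + (\<Sum>i=1..N. r i) \<le> 2 \<longleftrightarrow> 2 * q 0 + (\<Sum>i=1..N. q i) \<le> 2 * F"
  proof -
    have "2 * r 0 + (\<Sum>i=1..N. r i) = of_nat (2 * q 0 + (\<Sum>i=1..N. q i)) / of_nat F"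
      unfolding sum r[of 0, simplified] by (simp add: add_divide_distrib)
    moreover have "(of_nat (2 * q 0 + (\<Sum>i=1..N. q i)) :: rat) \<le> 2 * of_nat F \<longleftrightarrow>
        2 * q 0 + (\<Sum>i=1..N. q i) \<le> 2 * F"
      by (metis of_nat_le_iff of_nat_mult of_nat_numeral)
    ultimately show ?thesis
      using F_pos by (simp add: divide_le_eq del: of_nat_add of_nat_sum of_nat_mult)
  qed
  moreover have "\<forall>i\<in>{0..N}. r i \<ge> 0"
    using r by simp
  ultimately show ?thesis
    unfolding slot_constraints_def by blast
qed

lemma rat_common_denominator:
  fixes r :: "'a \<Rightarrow> rat"
  assumes "finite I"
  shows "\<exists>F::nat. F > 0 \<and> (\<forall>i\<in>I. \<exists>z::int. r i * of_nat F = of_int z)"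
  using assms
proof (induction I rule: finite_induct)
  case empty
  show ?case by (rule exI[of _ 1]) simp
next
  case (insert x I)
  obtain F where F: "F > 0" "\<forall>i\<in>I. \<exists>z::int. r i * of_nat F = of_int z"
    using insert.IH by blast
  obtain a d where ad: "quotient_of (r x) = (a, d)"
    by (cases "quotient_of (r x)") auto
  have d: "d > 0"
    using quotient_of_denom_pos'[of "r x"] ad by simp
  have rx: "r x = of_int a / of_int d"
    using quotient_of_div[OF ad] .
  define F' where "F' = F * nat d"
  have F': "(of_nat F' :: rat) = of_nat F * of_int d"
    unfolding F'_def using d by simp
  show ?case
  proof (rule exI[of _ F'], intro conjI ballI)
    show "F' > 0"
      unfolding F'_def using F(1) d by simp
    fix i assume "i \<in> insert x I"
    then show "\<exists>z::int. r i * of_nat F' = of_int z"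
    proof
      assume "i = x"
      have "r x * of_nat F' = of_int (a * int F)"
        unfolding F' rx using d by simp
      then show ?thesis
        using \<open>i = x\<close> by blast
    next
      assume "i \<in> I"
      then obtain z where "r i * of_nat F = of_int z"
        using F(2) by blast
      then have "r i * of_nat F' = of_int (z * d)"
        unfolding F' by (simp add: mult.assoc[symmetric])
      then show ?thesis
        by blast
    qed
  qed
qed

lemma nonneg_rat_common_denominator:
  fixes r :: "'a \<Rightarrow> rat"
  assumes "finite I" and nonneg: "\<forall>i\<in>I. r i \<ge> 0"
  obtains F :: nat and q :: "'a \<Rightarrow> nat" where "F > 0" "\<forall>i\<in>I. r i * of_nat F = of_nat (q i)"
proof -
  obtain F where F: "F > 0" and int: "\<forall>i\<in>I. \<exists>z::int. r i * of_nat F = of_int z"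
    using rat_common_denominator[OF assms(1)] by blast
  have "\<forall>i\<in>I. r i * of_nat F = of_nat (nat \<lfloor>r i * of_nat F\<rfloor>)"
  proof
    fix i assume "i \<in> I"
    then obtain z where z: "r i * of_nat F = of_int z"
      using int by blast
    have "0 \<le> r i * of_nat F"
      using nonneg \<open>i \<in> I\<close> by simp
    then show "r i * of_nat F = of_nat (nat \<lfloor>r i * of_nat F\<rfloor>)"
      unfolding z by simp
  qed
  then show thesis
    by (rule that[OF F])
qed

text \<open>The obligations of the first frame of a schedule when q f packets of every flow f are
  waiting at time 0.\<close>

locale first_frame_2N =
  fixes N F :: nat and sched :: "nat \<Rightarrow> config" and sel :: "nat \<Rightarrow> nat \<Rightarrow> nat option"
    and q :: "nat \<Rightarrow> nat"
  assumes N_pos: "N \<ge> 1"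
    and sched_valid: "\<forall>t<F. valid_config (flows2N N) inp2N (fan2N N) (sched t)"
    and delivery: "\<And>f k j. f \<in> flows2N N \<Longrightarrow> k < q f \<Longrightarrow> j \<in> fan2N N f \<Longrightarrow>
       \<exists>t<F. \<exists>i S. sched t i = Some (f, S) \<and> j \<in> S \<and> sel t i = Some k"
begin

lemma sched_SomeD:
  "t < F \<Longrightarrow> sched t i = Some (f, S) \<Longrightarrow> f \<in> {0..N} \<and> inp2N f = i \<and> S \<subseteq> fan2N N f"
  using sched_valid unfolding valid_config_def flows2N_def by blast

lemma inputs_disjoint:
  assumes "t < F" "sched t 1 = Some (f1, S1)" "sched t 2 = Some (f2, S2)"
  shows "S1 \<inter> S2 = {}"
proof -
  have "(1::nat) \<noteq> 2"
    by simp
  then show ?thesis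
    using sched_valid assms unfolding valid_config_def by blast
qed

lemma broadcast_delivery:
  assumes "k < q 0" "j \<in> {1..N}"
  shows "\<exists>t<F. \<exists>S. sched t 1 = Some (0, S) \<and> j \<in> S \<and> sel t 1 = Some k"
proof -
  obtain t i S where "t < F" "sched t i = Some (0, S)" "j \<in> S" "sel t i = Some k"
    using delivery[of 0 k j] assms by (auto simp: flows2N_def fan2N_def)
  moreover from this have "i = 1"
    using sched_SomeD[of t i 0 S] by (simp add: inp2N_def)
  ultimately show ?thesis by blast
qed

lemma unicast_delivery:
  assumes "i \<in> {1..N}" "k < q i"
  shows "\<exists>t<F. \<exists>S. sched t 2 = Some (i, S) \<and> i \<in> S \<and> sel t 2 = Some k"
proof -
  obtain t i' S where "t < F" "sched t i' = Some (i, S)" "i \<in> S" "sel t i' = Some k"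
    using delivery[of i k i] assms by (auto simp: flows2N_def fan2N_def)
  moreover from this have "i' = 2"
    using sched_SomeD[of t i' i S] assms(1) by (simp add: inp2N_def)
  ultimately show ?thesis by blast
qed

definition unicast_slots :: "nat \<Rightarrow> nat set" where
  "unicast_slots i = {t. t < F \<and> (\<exists>S. sched t 2 = Some (i, S) \<and> i \<in> S)}"

definition broadcast_slots :: "nat \<Rightarrow> nat set" where
  "broadcast_slots j = {t. t < F \<and> (\<exists>S. sched t 1 = Some (0, S) \<and> j \<in> S)}"

definition input2_busy :: "nat set" where
  "input2_busy = {t. t < F \<and> (\<exists>f S. sched t 2 = Some (f, S) \<and> S \<noteq> {})}"

definition copy_slots :: "nat \<Rightarrow> nat set" where
  "copy_slots k = {t. t < F \<and> (\<exists>S. sched t 1 = Some (0, S) \<and> sel t 1 = Some k)}"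

lemma finite_slot_sets [simp]:
  "finite (unicast_slots i)" "finite (broadcast_slots j)" "finite input2_busy" "finite (copy_slots k)"
  by (simp_all add: unicast_slots_def broadcast_slots_def input2_busy_def copy_slots_def)

lemma quota_le_card_unicast_slots:
  assumes i: "i \<in> {1..N}"
  shows "q i \<le> card (unicast_slots i)"
proof -
  have "{..<q i} \<subseteq> (\<lambda>t. the (sel t 2)) ` unicast_slots i"
  proof
    fix k assume "k \<in> {..<q i}"
    then obtain t S where "t < F" "sched t 2 = Some (i, S)" "i \<in> S" "sel t 2 = Some k"
      using unicast_delivery[OF i] by blast
    then show "k \<in> (\<lambda>t. the (sel t 2)) ` unicast_slots i"
      unfolding unicast_slots_def by (intro image_eqI[of _ _ t]) auto
  qed
  then show ?thesis
    using surj_card_le[of "unicast_slots i"] by fastforce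
qed

lemma quota_le_card_broadcast_slots:
  assumes j: "j \<in> {1..N}"
  shows "q 0 \<le> card (broadcast_slots j)"
proof -
  have "{..<q 0} \<subseteq> (\<lambda>t. the (sel t 1)) ` broadcast_slots j"
  proof
    fix k assume "k \<in> {..<q 0}"
    then obtain t S where "t < F" "sched t 1 = Some (0, S)" "j \<in> S" "sel t 1 = Some k"
      using broadcast_delivery j by blast
    then show "k \<in> (\<lambda>t. the (sel t 1)) ` broadcast_slots j"
      unfolding broadcast_slots_def by (intro image_eqI[of _ _ t]) auto
  qed
  then show ?thesis
    using surj_card_le[of "broadcast_slots j"] by fastforce
qed

lemma broadcast_unicast_bound:
  assumes i: "i \<in> {1..N}"
  shows "q 0 + q i \<le> F"
proof -
  have "broadcast_slots i \<inter> unicast_slots i = {}"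
    unfolding broadcast_slots_def unicast_slots_def using inputs_disjoint by blast
  then have "card (broadcast_slots i) + card (unicast_slots i) = card (broadcast_slots i \<union> unicast_slots i)"
    by (simp add: card_Un_disjoint)
  also have "\<dots> \<le> card {..<F}"
    by (rule card_mono) (auto simp: broadcast_slots_def unicast_slots_def)
  finally show ?thesis
    using quota_le_card_broadcast_slots[OF i] quota_le_card_unicast_slots[OF i] by simp
qed

lemma card_input2_busy_le: "card input2_busy \<le> F"
  using card_mono[of "{..<F}" input2_busy] by (auto simp: input2_busy_def)

lemma unicast_sum_le_busy: "(\<Sum>i=1..N. q i) \<le> card input2_busy"
proof -
  have "(\<Sum>i=1..N. q i) \<le> (\<Sum>i=1..N. card (unicast_slots i))"
    by (rule sum_mono) (rule quota_le_card_unicast_slots)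
  also have "\<dots> = card (\<Union>i\<in>{1..N}. unicast_slots i)"
    by (rule card_UN_disjoint[symmetric]) (auto simp: unicast_slots_def)
  also have "\<dots> \<le> card input2_busy"
    by (rule card_mono) (auto simp: unicast_slots_def input2_busy_def)
  finally show ?thesis .
qed

text \<open>The output that input 2 serves in one copy slot must be reached in another one.\<close>

lemma two_le_card_busy_copy_slots:
  assumes k: "k < q 0" and busy: "copy_slots k \<subseteq> input2_busy"
  shows "2 \<le> card (copy_slots k)"
proof -
  obtain t S where t: "t < F" "sched t 1 = Some (0, S)" "sel t 1 = Some k"
    using broadcast_delivery[OF k, of 1] N_pos by auto
  then have copy: "t \<in> copy_slots k"
    by (auto simp: copy_slots_def)
  then obtain f S2 where f: "sched t 2 = Some (f, S2)" "S2 \<noteq> {}"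
    using busy unfolding input2_busy_def by blast
  then have S2: "S2 = {f}" "f \<in> {1..N}"
    using sched_SomeD[OF t(1) f(1)] by (auto simp: inp2N_def fan2N_def split: if_splits)
  obtain t' S' where t': "t' < F" "sched t' 1 = Some (0, S')" "f \<in> S'" "sel t' 1 = Some k"
    using broadcast_delivery[OF k S2(2)] by blast
  have "f \<notin> S"
    using inputs_disjoint[OF t(1) t(2) f(1)] S2(1) by blast
  then have "t' \<noteq> t"
    using t(2) t'(2,3) by auto
  moreover have "{t, t'} \<subseteq> copy_slots k"
    using copy t' by (auto simp: copy_slots_def)
  ultimately show ?thesis
    using card_mono[of "copy_slots k" "{t, t'}"] by simp
qed

lemma two_le_card_copy_slots_idle:
  assumes "k < q 0"
  shows "2 \<le> card (copy_slots k) + card (copy_slots k - input2_busy)"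
proof (cases "copy_slots k \<subseteq> input2_busy")
  case True
  then show ?thesis
    using two_le_card_busy_copy_slots[OF assms] by simp
next
  case False
  then obtain t where "t \<in> copy_slots k - input2_busy"
    by blast
  then have "1 \<le> card (copy_slots k)" "1 \<le> card (copy_slots k - input2_busy)"
    by (auto simp: Suc_le_eq card_gt_0_iff)
  then show ?thesis
    by simp
qed

lemma broadcast_bound: "2 * q 0 + card input2_busy \<le> 2 * F"
proof -
  let ?idle = "\<lambda>k. copy_slots k - input2_busy"
  have disjoint: "\<forall>k\<in>{..<q 0}. \<forall>k'\<in>{..<q 0}. k \<noteq> k' \<longrightarrow> copy_slots k \<inter> copy_slots k' = {}"
    by (auto simp: copy_slots_def)
  have "(\<Sum>k<q 0. 2) \<le> (\<Sum>k<q 0. card (copy_slots k) + card (?idle k))"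
    by (rule sum_mono) (simp add: two_le_card_copy_slots_idle)
  also have "\<dots> = (\<Sum>k<q 0. card (copy_slots k)) + (\<Sum>k<q 0. card (?idle k))"
    by (rule sum.distrib)
  also have "(\<Sum>k<q 0. card (copy_slots k)) = card (\<Union>k<q 0. copy_slots k)"
    using disjoint by (simp add: card_UN_disjoint)
  also have "(\<Sum>k<q 0. card (?idle k)) = card (\<Union>k<q 0. ?idle k)"
    using disjoint by (intro card_UN_disjoint[symmetric]) auto
  also have "card (\<Union>k<q 0. copy_slots k) \<le> F"
    using card_mono[of "{..<F}" "\<Union>k<q 0. copy_slots k"] by (auto simp: copy_slots_def)
  also have "card (\<Union>k<q 0. ?idle k) \<le> card ({..<F} - input2_busy)"
    by (rule card_mono) (auto simp: copy_slots_def)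
  also have "\<dots> = F - card input2_busy"
    by (subst card_Diff_subset) (auto simp: input2_busy_def)
  finally show ?thesis
    using card_input2_busy_le by simp
qed

lemma first_frame_slot_constraints: "slot_constraints N F q"
  unfolding slot_constraints_def
  using unicast_sum_le_busy card_input2_busy_le broadcast_unicast_bound broadcast_bound by fastforce

end

locale design_2N =
  fixes N F :: nat and q :: "nat \<Rightarrow> nat"
  assumes N_pos: "N \<ge> 1" and frame_pos: "F > 0" and slots: "slot_constraints N F q"
begin

definition prefix :: "nat \<Rightarrow> nat" where
  "prefix i = (\<Sum>j=1..i. q j)"

definition unicast_total :: nat where
  "unicast_total = prefix N"

definition owner :: "nat \<Rightarrow> nat" where
  "owner p = (LEAST i. p < prefix i)"

definition nfull :: nat where
  "nfull = min (q 0) (F - unicast_total)"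

definition nsplit :: nat where
  "nsplit = q 0 - nfull"

definition shift :: nat where
  "shift = unicast_total - nsplit"

lemma prefix_Suc: "prefix (Suc i) = prefix i + q (Suc i)"
  by (simp add: prefix_def)

lemma prefix_pred: "1 \<le> i \<Longrightarrow> prefix i = prefix (i - 1) + q i"
  using prefix_Suc[of "i - 1"] by simp

lemma prefix_mono: "i \<le> j \<Longrightarrow> prefix i \<le> prefix j"
  unfolding prefix_def by (rule sum_mono2) auto

lemma owner_bounds:
  assumes "p < unicast_total"
  shows "1 \<le> owner p \<and> owner p \<le> N \<and> prefix (owner p - 1) \<le> p \<and> p < prefix (owner p)"
proof -
  have ex: "p < prefix N"
    using assms by (simp add: unicast_total_def)
  have lt: "p < prefix (owner p)"
    unfolding owner_def using ex by (rule LeastI)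
  have le: "owner p \<le> N"
    unfolding owner_def using ex by (rule Least_le)
  have ge: "owner p \<ge> 1"
    using lt by (cases "owner p") (auto simp: prefix_def)
  have "\<not> p < prefix (owner p - 1)"
  proof
    assume "p < prefix (owner p - 1)"
    then have "owner p \<le> owner p - 1"
      unfolding owner_def by (rule Least_le)
    then show False
      using ge by simp
  qed
  then show ?thesis
    using lt le ge by simp
qed

lemma owner_mem: "p < unicast_total \<Longrightarrow> owner p \<in> {1..N}"
  using owner_bounds by auto

lemma owner_eqI:
  assumes "1 \<le> i" "prefix (i - 1) \<le> p" "p < prefix i"
  shows "owner p = i"
proof -
  have le: "owner p \<le> i"
    unfolding owner_def using assms(3) by (rule Least_le)
  have lt: "p < prefix (owner p)"
    unfolding owner_def using assms(3) by (rule LeastI)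
  have "\<not> owner p < i"
  proof
    assume "owner p < i"
    then have "prefix (owner p) \<le> prefix (i - 1)"
      using prefix_mono by simp
    then show False
      using lt assms(2) by simp
  qed
  then show ?thesis
    using le by simp
qed

lemma unicast_total_le: "unicast_total \<le> F"
  using slots by (simp add: slot_constraints_def unicast_total_def prefix_def)

lemma split_counts:
  "nsplit \<le> shift" "nsplit + shift = unicast_total" "nfull + nsplit = q 0" "nfull + unicast_total \<le> F"
proof -
  have "2 * nsplit \<le> unicast_total"
    using slots unicast_total_le
    by (auto simp: nsplit_def nfull_def slot_constraints_def unicast_total_def prefix_def)
  then show "nsplit \<le> shift" "nsplit + shift = unicast_total"
    unfolding shift_def by simp_all
  show "nfull + nsplit = q 0" "nfull + unicast_total \<le> F"
    unfolding nfull_def nsplit_def using unicast_total_le by auto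
qed

lemma quota_le_shift:
  assumes "0 < nsplit" "i \<in> {1..N}"
  shows "q i \<le> shift"
proof -
  have "q 0 + q i \<le> F"
    using slots assms(2) by (simp add: slot_constraints_def)
  then show ?thesis
    using assms(1) unicast_total_le by (auto simp: shift_def nsplit_def nfull_def)
qed

text \<open>Once some broadcast packet has to be split, every unicast block is at most shift slots
  long, so slots p and p + shift lie in different blocks.\<close>

lemma owner_shift_neq:
  assumes "p < nsplit"
  shows "owner p \<noteq> owner (p + shift)"
proof
  assume eq: "owner p = owner (p + shift)"
  have "p < unicast_total" "p + shift < unicast_total"
    using assms split_counts by simp_all
  note own = owner_bounds[OF this(1)] owner_bounds[OF this(2)]
  have "shift < q (owner p)"
    using own eq prefix_pred[of "owner p"] by simp
  moreover have "q (owner p) \<le> shift"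
    using quota_le_shift[of "owner p"] assms own by simp
  ultimately show False
    by simp
qed

text \<open>Input 2 sends the unicast packets back to back, to output owner u in slot u < unicast_total.
  The first nfull broadcast packets go to all outputs at once in slots where input 2 is idle.
  Each remaining one, p < nsplit, is split: it goes to all outputs but owner p in slot p and
  to owner p alone in slot p + shift, where input 2 serves a different output.\<close>

definition cfg :: "nat \<Rightarrow> config" where
  "cfg u = (\<lambda>i.
     if i = 2 then (if u < unicast_total then Some (owner u, {owner u}) else None)
     else if i = 1 then
       (if u < nsplit then Some (0, {1..N} - {owner u})
        else if shift \<le> u \<and> u < unicast_total then Some (0, {owner (u - shift)})
        else if unicast_total \<le> u \<and> u < unicast_total + nfull then Some (0, {1..N})
        else None)
     else None)"

definition offset :: "nat \<Rightarrow> nat \<Rightarrow> nat" where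
  "offset u i =
     (if i = 2 then u - prefix (owner u - 1)
      else if u < nsplit then nfull + u
      else if shift \<le> u \<and> u < unicast_total then nfull + (u - shift)
      else u - unicast_total)"

lemma cfg_input2_iff:
  "cfg u 2 = Some (f, S) \<longleftrightarrow> u < unicast_total \<and> f = owner u \<and> S = {owner u}"
  unfolding cfg_def by auto

lemma cfg_input1_iff:
  "cfg u 1 = Some (f, S) \<longleftrightarrow> f = 0 \<and>
     ((u < nsplit \<and> S = {1..N} - {owner u} \<and> offset u 1 = nfull + u) \<or>
      (nsplit \<le> u \<and> shift \<le> u \<and> u < unicast_total \<and> S = {owner (u - shift)} \<and>
         offset u 1 = nfull + (u - shift)) \<or>
      (unicast_total \<le> u \<and> u < unicast_total + nfull \<and> S = {1..N} \<and>
         offset u 1 = u - unicast_total))"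
  unfolding cfg_def offset_def using split_counts by auto

lemma cfg_input1_offset:
  assumes "cfg u 1 = Some (f, S)"
  shows "offset u 1 < nfull \<and> u = unicast_total + offset u 1 \<or>
    nfull \<le> offset u 1 \<and> u = offset u 1 - nfull \<and> S = {1..N} - {owner (offset u 1 - nfull)} \<or>
    nfull \<le> offset u 1 \<and> u = shift + (offset u 1 - nfull) \<and> S = {owner (offset u 1 - nfull)}"
  using assms split_counts unfolding cfg_input1_iff by auto

lemma cfg_other_input: "i \<noteq> 1 \<Longrightarrow> i \<noteq> 2 \<Longrightarrow> cfg u i = None"
  unfolding cfg_def by simp

lemma cfg_inputs_disjoint:
  assumes "cfg u 1 = Some (f1, S1)" "cfg u 2 = Some (f2, S2)"
  shows "S1 \<inter> S2 = {}"
proof -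
  have u: "u < unicast_total" "S2 = {owner u}"
    using assms(2) cfg_input2_iff by auto
  show ?thesis
    using assms(1) unfolding cfg_input1_iff
  proof (elim conjE disjE)
    assume "shift \<le> u" "S1 = {owner (u - shift)}"
    moreover have "u - shift < nsplit"
      using u(1) \<open>shift \<le> u\<close> split_counts by simp
    ultimately show ?thesis
      using owner_shift_neq[of "u - shift"] u by auto
  qed (use u in auto)
qed

lemma cfg_valid: "valid_config {0..N} inp2N (fan2N N) (cfg u)"
  unfolding valid_config_def
proof (rule conjI; intro allI impI)
  fix i f S
  assume sent: "cfg u i = Some (f, S)"
  then consider "i = 1" | "i = 2"
    using cfg_other_input by fastforce
  then show "f \<in> {0..N} \<and> inp2N f = i \<and> S \<subseteq> fan2N N f"
  proof cases
    case 1
    have "cfg u 1 = Some (f, S)"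
      using sent 1 by simp
    then show ?thesis
      using owner_mem 1 unfolding cfg_input1_iff by (auto simp: inp2N_def fan2N_def)
  next
    case 2
    have "cfg u 2 = Some (f, S)"
      using sent 2 by simp
    then show ?thesis
      using owner_mem 2 unfolding cfg_input2_iff by (auto simp: inp2N_def fan2N_def Suc_le_eq)
  qed
next
  fix i1 i2 f1 f2 S1 S2
  assume sent: "cfg u i1 = Some (f1, S1) \<and> cfg u i2 = Some (f2, S2) \<and> i1 \<noteq> i2"
  then have "i1 = 1 \<and> i2 = 2 \<or> i1 = 2 \<and> i2 = 1"
    using cfg_other_input by (metis option.distinct(1))
  then show "S1 \<inter> S2 = {}"
    using sent cfg_inputs_disjoint by blast
qed

lemma cfg_outputs_nonempty:
  assumes sent: "cfg u i = Some (f, S)"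
  shows "S \<noteq> {}"
proof -
  consider "i = 1" | "i = 2"
    using sent cfg_other_input by fastforce
  then show ?thesis
  proof cases
    case 1
    show ?thesis
      using sent[unfolded 1 cfg_input1_iff]
    proof (elim conjE disjE)
      assume "u < nsplit" "S = {1..N} - {owner u}"
      moreover have "u + shift < unicast_total"
        using \<open>u < nsplit\<close> split_counts by simp
      ultimately have "owner (u + shift) \<in> S"
        using owner_mem owner_shift_neq[OF \<open>u < nsplit\<close>] by auto
      then show ?thesis
        by blast
    qed (use N_pos in auto)
  next
    case 2
    then show ?thesis
      using sent cfg_input2_iff by auto
  qed
qed

lemma same_offset_disjoint:
  assumes "u \<noteq> u'" and sent: "cfg u i = Some (f, S)" "cfg u' i = Some (f, S')"
    and same_offset: "offset u i = offset u' i"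
  shows "S \<inter> S' = {}"
proof -
  consider "i = 1" | "i = 2"
    using sent(1) cfg_other_input by fastforce
  then show ?thesis
  proof cases
    case 1
    have sent1: "cfg u 1 = Some (f, S)" "cfg u' 1 = Some (f, S')"
      using sent 1 by simp_all
    have "offset u 1 = offset u' 1"
      using same_offset 1 by simp
    then show ?thesis
      using cfg_input1_offset[OF sent1(1)] cfg_input1_offset[OF sent1(2)] \<open>u \<noteq> u'\<close> by auto
  next
    case 2
    then have slots: "u < unicast_total" "u' < unicast_total" and owners: "owner u = f" "owner u' = f"
      using sent cfg_input2_iff by auto
    have "prefix (f - 1) \<le> u" "prefix (f - 1) \<le> u'"
      using owner_bounds[OF slots(1)] owner_bounds[OF slots(2)] owners by auto
    moreover have "u - prefix (f - 1) = u' - prefix (f - 1)"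
      using same_offset 2 owners by (simp add: offset_def)
    ultimately show ?thesis
      using \<open>u \<noteq> u'\<close> by simp
  qed
qed

lemma broadcast_offsets_covered:
  assumes g: "g < q 0" and j: "j \<in> {1..N}"
  shows "\<exists>u<F. \<exists>S. cfg u 1 = Some (0, S) \<and> offset u 1 = g \<and> j \<in> S"
proof (cases "g < nfull")
  case True
  then show ?thesis
    unfolding cfg_input1_iff using split_counts j by (intro exI[of _ "unicast_total + g"]) (auto simp: offset_def)
next
  case False
  define p where "p = g - nfull"
  have p: "p < nsplit" "g = nfull + p"
    using False g split_counts unfolding p_def by auto
  show ?thesis
  proof (cases "j = owner p")
    case True
    then show ?thesis
      unfolding cfg_input1_iff using p split_counts by (intro exI[of _ "shift + p"]) (auto simp: offset_def)
  next
    case False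
    then show ?thesis
      unfolding cfg_input1_iff using p split_counts j by (intro exI[of _ p]) (auto simp: offset_def)
  qed
qed

lemma unicast_offsets_covered:
  assumes i: "i \<in> {1..N}" and g: "g < q i"
  shows "\<exists>u<F. cfg u 2 = Some (i, {i}) \<and> offset u 2 = g"
proof -
  define u where "u = prefix (i - 1) + g"
  have "u < prefix i"
    using g prefix_pred[of i] i unfolding u_def by simp
  moreover have "prefix i \<le> unicast_total"
    using prefix_mono i by (simp add: unicast_total_def)
  moreover have "owner u = i"
    using owner_eqI[of i u] \<open>u < prefix i\<close> i unfolding u_def by simp
  ultimately show ?thesis
    unfolding cfg_input2_iff using unicast_total_le by (intro exI[of _ u]) (auto simp: offset_def u_def)
qed

lemma is_frame_design: "frame_design {0..N} inp2N (fan2N N) F q cfg offset"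
proof
  show "F > 0" by (rule frame_pos)
  show "valid_config {0..N} inp2N (fan2N N) (cfg u)" for u by (rule cfg_valid)
  show "S \<noteq> {}" if "cfg u i = Some (f, S)" for u i f S
    using that by (rule cfg_outputs_nonempty)
  show "S \<inter> S' = {}" if "u \<noteq> u'" "cfg u i = Some (f, S)" "cfg u' i = Some (f, S')"
    "offset u i = offset u' i" for u u' i f S S'
    using that by (rule same_offset_disjoint)
  show "\<exists>u<F. \<exists>S. cfg u (inp2N f) = Some (f, S) \<and> offset u (inp2N f) = g \<and> j \<in> S"
    if "f \<in> {0..N}" "g < q f" "j \<in> fan2N N f" for f g j
  proof (cases "f = 0")
    case True
    then show ?thesis
      using that broadcast_offsets_covered by (simp add: inp2N_def fan2N_def)
  next
    case False
    then show ?thesis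
      using that unicast_offsets_covered[of f g] by (auto simp: inp2N_def fan2N_def)
  qed
  show "fan2N N f \<noteq> {}" for f
    using N_pos by (auto simp: fan2N_def)
qed

end

theorem theorem8:
  fixes N :: nat and r :: "nat \<Rightarrow> rat"
  assumes "N \<ge> 1"
  shows "achievable (flows2N N) inp2N (fan2N N) r \<longleftrightarrow>
    (\<forall>i\<in>{0..N}. r i \<ge> 0) \<and>
    (\<Sum>i=1..N. r i) \<le> 1 \<and>
    (\<forall>i\<in>{1..N}. r 0 + r i \<le> 1) \<and>
    2 * r 0 + (\<Sum>i=1..N. r i) \<le> 2"
    (is "_ \<longleftrightarrow> ?region")
proof
  assume "achievable (flows2N N) inp2N (fan2N N) r"
  then obtain F q sched sel where F: "F > 0" and rates: "\<forall>f\<in>flows2N N. r f * of_nat F = of_nat (q f)"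
    and "\<forall>t<F. valid_config (flows2N N) inp2N (fan2N N) (sched t)"
    and "\<And>f k j. f \<in> flows2N N \<Longrightarrow> k < q f \<Longrightarrow> j \<in> fan2N N f \<Longrightarrow>
       \<exists>t<F. \<exists>i S. sched t i = Some (f, S) \<and> j \<in> S \<and> sel t i = Some k"
    by (rule achievable_first_frame_delivery) blast
  then interpret first_frame_2N N F sched sel q
    using assms by unfold_locales
  show ?region
    using rate_region_iff_slot_constraints[OF F rates[unfolded flows2N_def]] first_frame_slot_constraints
    by blast
next
  assume region: ?region
  then obtain F q where F: "F > 0" and rates: "\<forall>f\<in>{0..N}. r f * of_nat F = of_nat (q f)"
    using nonneg_rat_common_denominator[of "{0..N}" r] by blast
  then have "slot_constraints N F q"
    using region rate_region_iff_slot_constraints by blast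
  then interpret design_2N N F q
    using assms F by unfold_locales
  interpret frame_design "{0..N}" inp2N "fan2N N" F q cfg offset
    by (rule is_frame_design)
  show "achievable (flows2N N) inp2N (fan2N N) r"
    unfolding flows2N_def using rates by (rule design_achievable)
qed

end
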